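(* Let $A\in\{\mathbb Z,\mathbb R\}$ and $\Delta_2=\mathrm{conv}(\mathbf 0,e_1,e_2)$. Up to $A$-unimodular transformations there is exactly one unbounded two-dimensional closed convex set $C\subset\mathbb R^2$ which is $A$-$\Delta_2$-free and inclusion-maximal among $A$-$\Delta_2$-free closed convex sets, namely $C=[-1,1]\times\mathbb R$ if $A=\mathbb Z$ and $C=[0,1]\times\mathbb R$ if $A=\mathbb R$. In particular its lattice width is $2$ if $A=\mathbb Z$ and $1$ if $A=\mathbb R$.
   Context: An $A$-unimodular transformation is a map $T(x)=Mx+b$ with $M\in \mathrm{GL}_2(\mathbb Z)$ and $b\in A^2$; an $A$-unimodular copy of $X$ is $T(X)$. A convex set is $A$-$X$-free if its relative interior contains no $A$-unimodular copy of $X$. Lattice width: $\mathrm{width}(K)=\inf_{u\in(\mathbb Z^2)^*\setminus\{0\}}\sup_{x,y\in K}|u(x)-u(y)|$. *)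

theory Defs
  imports "HOL-Analysis.Analysis"
begin

text \<open>The parameter A is a set of reals: either \<int> (Ints) or UNIV (= \<real>).\<close>

definition unimodular_map :: "real set \<Rightarrow> (real^2 \<Rightarrow> real^2) \<Rightarrow> bool" where
  "unimodular_map A T \<longleftrightarrow>
     (\<exists>M::real^2^2. \<exists>b::real^2. (\<forall>i j. M $ i $ j \<in> \<int>) \<and> \<bar>det M\<bar> = 1 \<and>
        (\<forall>i. b $ i \<in> A) \<and> T = (\<lambda>x. M *v x + b))"

definition Delta2 :: "(real^2) set" where
  "Delta2 = convex hull {0, axis 1 1, axis 2 1}"

definition free :: "real set \<Rightarrow> (real^2) set \<Rightarrow> (real^2) set \<Rightarrow> bool" where
  "free A X K \<longleftrightarrow> \<not> (\<exists>T. unimodular_map A T \<and> T ` X \<subseteq> rel_interior K)"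

definition maximal_free :: "real set \<Rightarrow> (real^2) set \<Rightarrow> (real^2) set \<Rightarrow> bool" where
  "maximal_free A X K \<longleftrightarrow> closed K \<and> convex K \<and> free A X K \<and>
     (\<forall>K'. closed K' \<and> convex K' \<and> free A X K' \<and> K \<subseteq> K' \<longrightarrow> K' = K)"

definition lattice_width :: "(real^2) set \<Rightarrow> ereal" where
  "lattice_width K = (INF u\<in>{u::real^2. (\<forall>i. u $ i \<in> \<int>) \<and> u \<noteq> 0}.
       SUP p\<in>K \<times> K. ereal \<bar>u \<bullet> fst p - u \<bullet> snd p\<bar>)"

end

theory Submission
  imports Defs "HOL-Analysis.Kronecker_Approximation_Theorem"
begin

text \<open>An unbounded closed convex set \<open>C\<close> contains a ray in some direction \<open>d\<close>. If \<open>C\<close> is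
  maximal free, it contains the full line in direction \<open>d\<close> through each of its points: integer
  vectors close to large multiples of \<open>d\<close> (Dirichlet's approximation theorem) move any unimodular
  triangle in the interior of \<open>C + \<real> d\<close> into the interior of \<open>C\<close>, so the closure of \<open>C + \<real> d\<close>
  is still free. The direction \<open>d\<close> is rational: otherwise there are primitive lattice vectors
  that are arbitrarily close to the line \<open>\<real> d\<close>, and a unimodular triangle with such an edge fits
  into a thin slab of interior points parallel to \<open>d\<close>. After a unimodular change of coordinates
  \<open>d\<close> is vertical and \<open>C = I \<times> \<real>\<close>; a unimodular triangle fits into the open strip over \<open>I\<close> as
  soon as the interior of \<open>I\<close> contains some \<open>[s, s + 1]\<close> with \<open>s \<in> A\<close>. This bounds \<open>I\<close> by \<open>[m - 1, m + 1]\<close> with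
  \<open>m \<in> \<int>\<close> for \<open>A = \<int>\<close> and by \<open>[a, a + 1]\<close> for \<open>A = \<real>\<close>, and maximality makes these
  inclusions equalities.\<close>

lemma matrix_vector_mult_nth_2: "((M::real^2^2) *v x) $ i = M$i$1 * x$1 + M$i$2 * x$2"
  by (simp add: matrix_vector_mult_def sum_2)

lemma matrix_matrix_mult_nth_2: "((M::real^2^2) ** N) $ i $ j = M$i$1 * N$1$j + M$i$2 * N$2$j"
  by (simp add: matrix_matrix_mult_def sum_2)

lemma inner_2: "(u::real^2) \<bullet> x = u$1 * x$1 + u$2 * x$2"
  by (simp add: inner_vec_def sum_2)

lemma norm_le_abs_nth_2: "norm (x::real^2) \<le> \<bar>x$1\<bar> + \<bar>x$2\<bar>"
  using norm_le_l1_cart[of x] by (simp add: sum_2)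

lemma axis_nth_2 [simp]:
  "(axis 1 1 :: real^2) $ 1 = 1" "(axis 1 1 :: real^2) $ 2 = 0"
  "(axis 2 1 :: real^2) $ 1 = 0" "(axis 2 1 :: real^2) $ 2 = 1"
  by (simp_all add: axis_def)

lemma Ints_abs_less_one: "(x::real) \<in> \<int> \<Longrightarrow> \<bar>x\<bar> < 1 \<Longrightarrow> x = 0"
  by (elim Ints_cases) simp

section \<open>Unimodular maps\<close>

lemma integer_unimodular_matrix_inverse:
  fixes M :: "real^2^2"
  assumes M: "\<forall>i j. M $ i $ j \<in> \<int>" "\<bar>det M\<bar> = 1"
  obtains N where "\<forall>i j. N $ i $ j \<in> \<int>" "\<bar>det N\<bar> = 1" "N ** M = mat 1" "M ** N = mat 1"
proof -
  define e where "e = det M"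
  have e: "e * e = 1" "e \<in> \<int>"
    using M unfolding e_def det_2 by (metis abs_mult_self_eq mult_1_left, auto)
  define N :: "real^2^2" where
    "N = vector [vector [e * M$2$2, - e * M$1$2], vector [- e * M$2$1, e * M$1$1]]"
  have N: "N$1$1 = e * M$2$2" "N$1$2 = - e * M$1$2" "N$2$1 = - e * M$2$1" "N$2$2 = e * M$1$1"
    by (simp_all add: N_def)
  have det_M: "M$1$1 * M$2$2 - M$1$2 * M$2$1 = e"
    by (simp add: e_def det_2)
  have "\<forall>i j. N $ i $ j \<in> \<int>"
    using M(1) e(2) by (auto simp: forall_2 N)
  moreover have "det N = e * e * e"
    by (simp add: det_2 N det_M[symmetric] algebra_simps)
  then have "\<bar>det N\<bar> = 1"
    using e M(2) e_def by simp
  moreover have "N ** M = mat 1" "M ** N = mat 1"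
    using e(1) det_M
    by (simp_all add: vec_eq_iff forall_2 matrix_matrix_mult_nth_2 N mat_def algebra_simps)
  ultimately show ?thesis
    using that by blast
qed

lemma unimodular_image_eq:
  assumes "unimodular_map A T"
  obtains f b where "linear f" "inj f" "\<And>K. T ` K = (+) b ` f ` K"
proof -
  obtain M b where M: "\<bar>det M\<bar> = 1" "T = (\<lambda>x. M *v x + b)"
    using assms unfolding unimodular_map_def by blast
  have "inj ((*v) M)"
    using M(1) by (simp add: invertible_det_nz inj_matrix_vector_mult)
  moreover have "T ` K = (+) b ` (*v) M ` K" for K
    unfolding M(2) image_image by (simp add: add.commute)
  ultimately show ?thesis
    using that matrix_vector_mul_linear by blast
qed

lemma closed_unimodular_image:
  assumes "unimodular_map A T" "closed K"
  shows "closed (T ` K)"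
proof -
  obtain f b where f: "linear f" "inj f" "T ` K = (+) b ` f ` K"
    using unimodular_image_eq[OF assms(1)] by metis
  show ?thesis
    unfolding f(3) using closed_injective_linear_image[OF assms(2) f(1,2)] by (rule closed_translation)
qed

lemma convex_unimodular_image:
  assumes "unimodular_map A T" "convex K"
  shows "convex (T ` K)"
proof -
  obtain f b where f: "linear f" "T ` K = (+) b ` f ` K"
    using unimodular_image_eq[OF assms(1)] by metis
  show ?thesis
    unfolding f(2) using convex_linear_image[OF f(1) assms(2)] by (rule convex_translation)
qed

lemma bounded_unimodular_image:
  assumes "unimodular_map A T" "bounded K"
  shows "bounded (T ` K)"
proof -
  obtain f b where f: "linear f" "T ` K = (+) b ` f ` K"
    using unimodular_image_eq[OF assms(1)] by metis
  have "bounded (f ` K)"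
    using bounded_linear_image[OF assms(2)] f(1) by (simp add: linear_conv_bounded_linear)
  then show ?thesis
    unfolding f(2) by (rule bounded_translation)
qed

lemma aff_dim_unimodular_image:
  assumes "unimodular_map A T"
  shows "aff_dim (T ` K) = aff_dim K"
proof -
  obtain f b where f: "linear f" "inj f" "T ` K = (+) b ` f ` K"
    using unimodular_image_eq[OF assms(1)] by metis
  show ?thesis
    unfolding f(3) aff_dim_translation_eq aff_dim_injective_linear_image[OF f(1,2)] ..
qed

lemma rel_interior_unimodular_image:
  assumes "unimodular_map A T"
  shows "rel_interior (T ` K) = T ` rel_interior K"
proof -
  obtain f b where f: "linear f" "inj f" "\<And>K. T ` K = (+) b ` f ` K"
    using unimodular_image_eq[OF assms(1)] by metis
  show ?thesis
    unfolding f(3) rel_interior_translation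
      rel_interior_injective_linear_image[OF f(1)[unfolded linear_conv_bounded_linear] f(2)] ..
qed

lemma convex_hull_unimodular_image:
  assumes "unimodular_map A T"
  shows "T ` (convex hull X) = convex hull (T ` X)"
proof -
  obtain f b where f: "linear f" "\<And>K. T ` K = (+) b ` f ` K"
    using unimodular_image_eq[OF assms(1)] by metis
  show ?thesis
    unfolding f(2) convex_hull_linear_image[OF f(1)] convex_hull_translation ..
qed

lemma unimodular_mapI:
  assumes "a \<in> \<int>" "b \<in> \<int>" "c \<in> \<int>" "d \<in> \<int>" "\<bar>a * d - b * c\<bar> = 1" "e \<in> A" "f \<in> A"
  shows "unimodular_map A (\<lambda>x. vector [a * x$1 + b * x$2 + e, c * x$1 + d * x$2 + f])"
  unfolding unimodular_map_def
  by (rule exI[of _ "vector [vector [a, b], vector [c, d]]"], rule exI[of _ "vector [e, f]"])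
    (use assms in \<open>auto simp: forall_2 det_2 fun_eq_iff vec_eq_iff matrix_vector_mult_nth_2\<close>)

lemma unimodular_map_translation:
  assumes "\<forall>i. v $ i \<in> A"
  shows "unimodular_map A (\<lambda>x. x + v)"
  unfolding unimodular_map_def
  by (rule exI[of _ "mat 1"], rule exI[of _ v]) (use assms in \<open>auto simp: det_I; simp add: mat_def\<close>)

lemma Delta2_vertices: "0 \<in> Delta2" "axis 1 1 \<in> Delta2" "axis 2 1 \<in> Delta2"
  unfolding Delta2_def by (auto intro: hull_inc)

lemma unimodular_Delta2_subset:
  assumes "unimodular_map A T" "convex K" "T 0 \<in> K" "T (axis 1 1) \<in> K" "T (axis 2 1) \<in> K"
  shows "T ` Delta2 \<subseteq> K"
  unfolding Delta2_def convex_hull_unimodular_image[OF assms(1)]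
  by (rule hull_minimal) (use assms in auto)

lemma free_Delta2_vertices:
  assumes "free A Delta2 K" "convex K" "unimodular_map A T"
  shows "\<not> (T 0 \<in> rel_interior K \<and> T (axis 1 1) \<in> rel_interior K \<and> T (axis 2 1) \<in> rel_interior K)"
  using unimodular_Delta2_subset[OF assms(3) convex_rel_interior[OF assms(2)]] assms(1,3)
  unfolding free_def by blast

text \<open>Exactly what makes the \<open>A\<close>-unimodular maps a group containing all integer translations.\<close>
locale translation_group =
  fixes A :: "real set"
  assumes Ints_subset: "\<int> \<subseteq> A"
    and add_mem: "x \<in> A \<Longrightarrow> y \<in> A \<Longrightarrow> x + y \<in> A"
    and Ints_mult_mem: "k \<in> \<int> \<Longrightarrow> x \<in> A \<Longrightarrow> k * x \<in> A"
begin

lemma integer_matrix_vector_mem: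
  assumes "\<forall>i j. M $ i $ j \<in> \<int>" "\<forall>i. b $ i \<in> A"
  shows "((M::real^2^2) *v b) $ i \<in> A"
  using assms by (simp add: matrix_vector_mult_nth_2 add_mem Ints_mult_mem)

lemma unimodular_map_comp:
  assumes "unimodular_map A T" "unimodular_map A T'"
  shows "unimodular_map A (T' \<circ> T)"
proof -
  obtain M b where M: "\<forall>i j. M $ i $ j \<in> \<int>" "\<bar>det M\<bar> = 1" "\<forall>i. b $ i \<in> A" "T = (\<lambda>x. M *v x + b)"
    using assms(1) unfolding unimodular_map_def by blast
  obtain M' b' where M': "\<forall>i j. M' $ i $ j \<in> \<int>" "\<bar>det M'\<bar> = 1" "\<forall>i. b' $ i \<in> A"
    "T' = (\<lambda>x. M' *v x + b')"
    using assms(2) unfolding unimodular_map_def by blast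
  have "\<forall>i j. (M' ** M) $ i $ j \<in> \<int>"
    using M(1) M'(1) by (simp add: matrix_matrix_mult_nth_2)
  moreover have "\<bar>det (M' ** M)\<bar> = 1"
    using M(2) M'(2) by (simp add: det_mul abs_mult)
  moreover have "\<forall>i. (M' *v b + b') $ i \<in> A"
    using integer_matrix_vector_mem[OF M'(1) M(3)] M'(3) by (simp add: add_mem)
  moreover have "T' \<circ> T = (\<lambda>x. (M' ** M) *v x + (M' *v b + b'))"
    using M(4) M'(4) by (auto simp: fun_eq_iff matrix_vector_right_distrib matrix_vector_mul_assoc)
  ultimately show ?thesis
    unfolding unimodular_map_def by blast
qed

lemma unimodular_map_inverse:
  assumes "unimodular_map A T"
  obtains S where "unimodular_map A S" "\<And>x. S (T x) = x" "\<And>x. T (S x) = x"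
proof -
  obtain M b where M: "\<forall>i j. M $ i $ j \<in> \<int>" "\<bar>det M\<bar> = 1" "\<forall>i. b $ i \<in> A" "T = (\<lambda>x. M *v x + b)"
    using assms unfolding unimodular_map_def by blast
  obtain N where N: "\<forall>i j. N $ i $ j \<in> \<int>" "\<bar>det N\<bar> = 1" "N ** M = mat 1" "M ** N = mat 1"
    using integer_unimodular_matrix_inverse[OF M(1,2)] .
  have "\<forall>i. (- (N *v b)) $ i \<in> A"
    using Ints_mult_mem[of "-1"] integer_matrix_vector_mem[OF N(1) M(3)] by simp
  then have "unimodular_map A (\<lambda>y. N *v y + - (N *v b))"
    unfolding unimodular_map_def using N(1,2) by blast
  moreover have "N *v T x + - (N *v b) = x" "T (N *v x + - (N *v b)) = x" for x
    unfolding M(4) by (simp_all add: matrix_vector_right_distrib matrix_vector_mult_diff_distrib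
        matrix_vector_mul_assoc N(3,4))
  ultimately show ?thesis
    using that by blast
qed

lemma bounded_unimodular_image_iff:
  assumes "unimodular_map A T"
  shows "bounded (T ` K) \<longleftrightarrow> bounded K"
proof
  obtain S where S: "unimodular_map A S" "\<And>x. S (T x) = x"
    using unimodular_map_inverse[OF assms] by metis
  assume "bounded (T ` K)"
  then have "bounded (S ` T ` K)"
    using bounded_unimodular_image[OF S(1)] by blast
  then show "bounded K"
    by (simp add: image_image S(2))
qed (rule bounded_unimodular_image[OF assms])

lemma free_unimodular_image:
  assumes T: "unimodular_map A T" and "free A Delta2 K"
  shows "free A Delta2 (T ` K)"
  unfolding free_def
proof
  obtain S where S: "unimodular_map A S" "\<And>x. S (T x) = x"
    using unimodular_map_inverse[OF T] by metis
  assume "\<exists>T2. unimodular_map A T2 \<and> T2 ` Delta2 \<subseteq> rel_interior (T ` K)"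
  then obtain T2 where T2: "unimodular_map A T2" "T2 ` Delta2 \<subseteq> T ` rel_interior K"
    using rel_interior_unimodular_image[OF T] by auto
  have "(S \<circ> T2) ` Delta2 \<subseteq> rel_interior K"
    using T2(2) S(2) by (fastforce simp: image_comp[symmetric])
  then show False
    using unimodular_map_comp[OF T2(1) S(1)] assms(2) unfolding free_def by blast
qed

lemma maximal_free_unimodular_image:
  assumes T: "unimodular_map A T" and K: "maximal_free A Delta2 K"
  shows "maximal_free A Delta2 (T ` K)"
  unfolding maximal_free_def
proof (intro conjI allI impI)
  obtain S where S: "unimodular_map A S" "\<And>x. S (T x) = x" "\<And>x. T (S x) = x"
    using unimodular_map_inverse[OF T] by metis
  have K_props: "closed K" "convex K" "free A Delta2 K"
    using K unfolding maximal_free_def by blast+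
  then show "closed (T ` K)" "convex (T ` K)" "free A Delta2 (T ` K)"
    by (simp_all add: closed_unimodular_image[OF T] convex_unimodular_image[OF T]
        free_unimodular_image[OF T])
  fix K' assume K': "closed K' \<and> convex K' \<and> free A Delta2 K' \<and> T ` K \<subseteq> K'"
  have "S ` T ` K \<subseteq> S ` K'"
    using K' by blast
  then have "K \<subseteq> S ` K'"
    by (simp add: image_image S(2))
  moreover have "closed (S ` K')" "convex (S ` K')" "free A Delta2 (S ` K')"
    using K' by (simp_all add: closed_unimodular_image[OF S(1)] convex_unimodular_image[OF S(1)]
        free_unimodular_image[OF S(1)])
  ultimately have "S ` K' = K"
    using K unfolding maximal_free_def by blast
  then have "T ` S ` K' = T ` K"
    by simp
  then show "K' = T ` K"
    by (simp add: image_image S(3))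
qed

end

section \<open>Recession and lineality directions\<close>

definition recession_direction :: "'a::real_vector \<Rightarrow> 'a set \<Rightarrow> bool" where
  "recession_direction d C \<longleftrightarrow> (\<forall>x\<in>C. \<forall>t\<ge>0. x + t *\<^sub>R d \<in> C)"

definition lineality_direction :: "'a::real_vector \<Rightarrow> 'a set \<Rightarrow> bool" where
  "lineality_direction d C \<longleftrightarrow> (\<forall>x\<in>C. \<forall>t. x + t *\<^sub>R d \<in> C)"

lemma lineality_direction_iff:
  "lineality_direction d C \<longleftrightarrow> recession_direction d C \<and> recession_direction (- d) C"
proof
  assume "recession_direction d C \<and> recession_direction (- d) C"
  then have "x + t *\<^sub>R d \<in> C" if "x \<in> C" for x t
    using that unfolding recession_direction_def
    by (cases "t \<ge> 0") (auto dest!: bspec[of _ _ x] dest: spec[of _ "- t"])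
  then show "lineality_direction d C"
    unfolding lineality_direction_def by blast
next
  assume "lineality_direction d C"
  then show "recession_direction d C \<and> recession_direction (- d) C"
    unfolding lineality_direction_def recession_direction_def
    by (metis scaleR_minus_left scaleR_minus_right)
qed

lemma lineality_direction_scaleR:
  "lineality_direction d C \<Longrightarrow> lineality_direction (c *\<^sub>R d) C"
  unfolding lineality_direction_def by simp

lemma convex_mem_towards:
  "convex C \<Longrightarrow> x \<in> C \<Longrightarrow> y \<in> C \<Longrightarrow> 0 \<le> u \<Longrightarrow> u \<le> 1 \<Longrightarrow> x + u *\<^sub>R (y - x) \<in> C"
  using convexD[of C x y "1 - u" u] by (simp add: algebra_simps)

lemma recession_direction_closed_convex:
  fixes C :: "'a::real_normed_vector set"
  assumes C: "closed C" "convex C" and x0: "x0 \<in> C" and ray: "\<And>t. 0 \<le> t \<Longrightarrow> x0 + t *\<^sub>R d \<in> C"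
  shows "recession_direction d C"
  unfolding recession_direction_def
proof (intro ballI allI impI)
  fix x t assume x: "x \<in> C" and t: "0 \<le> (t::real)"
  define y where "y n = x + inverse (real (Suc n)) *\<^sub>R ((x0 + (real (Suc n) * t) *\<^sub>R d) - x)" for n
  have "y n \<in> C" for n
    unfolding y_def by (rule convex_mem_towards[OF C(2) x ray]) (use t in \<open>auto simp: inverse_le_1_iff\<close>)
  moreover have "y n = (x + t *\<^sub>R d) + inverse (real (Suc n)) *\<^sub>R (x0 - x)" for n
  proof -
    have "inverse (real (Suc n)) * (real (Suc n) * t) = t"
      by simp
    then show ?thesis
      unfolding y_def by (simp add: algebra_simps del: of_nat_Suc)
  qed
  moreover have "(\<lambda>n. (x + t *\<^sub>R d) + inverse (real (Suc n)) *\<^sub>R (x0 - x)) \<longlonglongrightarrow> x + t *\<^sub>R d"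
    using tendsto_add[OF tendsto_const tendsto_scaleR[OF LIMSEQ_inverse_real_of_nat tendsto_const]]
    by simp
  ultimately show "x + t *\<^sub>R d \<in> C"
    using closed_sequentially[OF C(1)] by metis
qed

lemma unbounded_far_point:
  fixes C :: "'a::real_normed_vector set"
  assumes "\<not> bounded C"
  shows "\<exists>y\<in>C. r < norm (y - x0)"
proof (rule ccontr)
  assume "\<not> ?thesis"
  then have "C \<subseteq> cball x0 r"
    by (auto simp: dist_norm norm_minus_commute)
  then show False
    using assms bounded_cball bounded_subset by blast
qed

lemma unbounded_closed_convex_ray:
  fixes C :: "'a::euclidean_space set"
  assumes C: "closed C" "convex C" "\<not> bounded C" and x0: "x0 \<in> C"
  obtains d where "d \<noteq> 0" "\<And>t. 0 \<le> t \<Longrightarrow> x0 + t *\<^sub>R d \<in> C"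
proof -
  have "\<exists>y\<in>C. real n < norm (y - x0)" for n :: nat
    using unbounded_far_point[OF C(3)] .
  then obtain y where y: "\<And>n. y n \<in> C" "\<And>n. real n < norm (y n - x0)"
    by metis
  define u where "u n = (1 / norm (y n - x0)) *\<^sub>R (y n - x0)" for n
  have y_far: "norm (y n - x0) > 0" for n
    using y(2)[of n] by linarith
  then have "u n \<in> sphere 0 1" for n
    unfolding u_def by simp
  then obtain l r where l: "l \<in> sphere 0 1" "strict_mono r" "(u \<circ> r) \<longlonglongrightarrow> l"
    using compact_sphere[THEN compact_imp_seq_compact, THEN seq_compactE] by metis
  have "x0 + t *\<^sub>R l \<in> C" if t: "0 \<le> t" for t
  proof (rule Lim_in_closed_set[OF C(1)])
    show "(\<lambda>k. x0 + t *\<^sub>R (u \<circ> r) k) \<longlonglongrightarrow> x0 + t *\<^sub>R l"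
      by (intro tendsto_intros l(3))
    show "\<forall>\<^sub>F k in sequentially. x0 + t *\<^sub>R (u \<circ> r) k \<in> C"
    proof (rule eventually_sequentiallyI[of "nat \<lceil>t\<rceil>"])
      fix k assume k: "nat \<lceil>t\<rceil> \<le> k"
      have "real k \<le> real (r k)"
        using seq_suble[OF l(2)] by simp
      then have "t \<le> norm (y (r k) - x0)"
        using k y(2)[of "r k"] by linarith
      then have "x0 + (t / norm (y (r k) - x0)) *\<^sub>R (y (r k) - x0) \<in> C"
        using convex_mem_towards[OF C(2) x0 y(1)[of "r k"]] y_far[of "r k"] t by simp
      then show "x0 + t *\<^sub>R (u \<circ> r) k \<in> C"
        unfolding u_def by simp
    qed
  qed simp
  moreover have "l \<noteq> 0"
    using l(1) by auto
  ultimately show ?thesis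
    using that by blast
qed

lemma unbounded_closed_convex_recession_direction:
  fixes C :: "'a::euclidean_space set"
  assumes C: "closed C" "convex C" "\<not> bounded C"
  obtains d where "d \<noteq> 0" "recession_direction d C"
proof -
  obtain x0 where x0: "x0 \<in> C"
    using C(3) by fastforce
  obtain d where "d \<noteq> 0" "\<And>t. 0 \<le> t \<Longrightarrow> x0 + t *\<^sub>R d \<in> C"
    using unbounded_closed_convex_ray[OF C x0] by blast
  then show ?thesis
    using that recession_direction_closed_convex[OF C(1,2) x0] by blast
qed

lemma translation_mem_interior:
  fixes C :: "'a::real_normed_vector set"
  assumes "\<And>y. y \<in> C \<Longrightarrow> y + v \<in> C" "x \<in> interior C"
  shows "x + v \<in> interior C"
proof -
  have "(+) v ` C \<subseteq> C"
    using assms(1) by (auto simp: add.commute)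
  then have "(+) v ` interior C \<subseteq> interior C"
    using interior_mono interior_translation by metis
  then show ?thesis
    using assms(2) by (auto simp: add.commute)
qed

section \<open>Strips\<close>

definition strip :: "real \<Rightarrow> real \<Rightarrow> (real^2) set" where
  "strip a b = {x. a \<le> x$1 \<and> x$1 \<le> b}"

definition open_strip :: "real \<Rightarrow> real \<Rightarrow> (real^2) set" where
  "open_strip a b = {x. a < x$1 \<and> x$1 < b}"

lemma strip_vimage: "strip a b = (\<lambda>x. x$1) -` {a..b}"
  by (auto simp: strip_def)

lemma open_strip_vimage: "open_strip a b = (\<lambda>x. x$1) -` {a<..<b}"
  by (auto simp: open_strip_def)

lemma closed_strip: "closed (strip a b)"
  unfolding strip_vimage by (rule closed_vimage_vec_nth) simp

lemma open_open_strip: "open (open_strip a b)"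
  unfolding open_strip_vimage by (rule open_vimage_vec_nth) simp

lemma linear_vec_nth: "linear (\<lambda>x::real^'n. x$i)"
  by (rule bounded_linear.linear[OF bounded_linear_vec_nth])

lemma convex_strip: "convex (strip a b)"
  unfolding strip_vimage by (rule convex_linear_vimage[OF linear_vec_nth]) simp

lemma convex_open_strip: "convex (open_strip a b)"
  unfolding open_strip_vimage by (rule convex_linear_vimage[OF linear_vec_nth]) simp

lemma open_strip_subset_strip: "open_strip a b \<subseteq> strip a b"
  unfolding open_strip_def strip_def by auto

lemma unbounded_strip:
  assumes "a \<le> b"
  shows "\<not> bounded (strip a b)"
proof
  assume "bounded (strip a b)"
  then obtain B where B: "\<And>x. x \<in> strip a b \<Longrightarrow> norm x \<le> B"
    by (meson bounded_iff)
  have "\<bar>(vector [a, B + 1] :: real^2) $ 2\<bar> \<le> norm (vector [a, B + 1] :: real^2)"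
    by (rule component_le_norm_cart)
  moreover have "norm (vector [a, B + 1] :: real^2) \<le> B"
    by (rule B) (use assms in \<open>simp add: strip_def\<close>)
  ultimately show False
    by simp
qed

lemma interior_strip: "interior (strip a b) = open_strip a b"
proof
  show "open_strip a b \<subseteq> interior (strip a b)"
    by (rule interior_maximal[OF open_strip_subset_strip open_open_strip])
  show "interior (strip a b) \<subseteq> open_strip a b"
  proof
    fix x assume "x \<in> interior (strip a b)"
    then obtain e where e: "e > 0" "ball x e \<subseteq> strip a b"
      by (auto simp: mem_interior)
    have "x + (e/2) *\<^sub>R axis 1 1 \<in> ball x e" "x - (e/2) *\<^sub>R axis 1 1 \<in> ball x e"
      using e(1) by (auto simp: dist_norm)
    then have "x + (e/2) *\<^sub>R axis 1 1 \<in> strip a b" "x - (e/2) *\<^sub>R axis 1 1 \<in> strip a b"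
      using e(2) by auto
    then show "x \<in> open_strip a b"
      using e(1) by (auto simp: strip_def open_strip_def)
  qed
qed

lemma open_strip_nonempty: "a < b \<Longrightarrow> open_strip a b \<noteq> {}"
  unfolding open_strip_def by (auto intro!: exI[of _ "vector [(a + b) / 2, 0]"])

lemma rel_interior_strip: "a < b \<Longrightarrow> rel_interior (strip a b) = open_strip a b"
  using rel_interior_nonempty_interior[of "strip a b"] interior_strip open_strip_nonempty by simp

lemma aff_dim_strip: "a < b \<Longrightarrow> aff_dim (strip a b) = 2"
  using aff_dim_nonempty_interior[of "strip a b"] interior_strip open_strip_nonempty by simp

lemma strip_translation: "(\<lambda>x. x + vector [m, 0]) ` strip a b = strip (a + m) (b + m)"
proof (rule set_eqI, rule iffI)
  fix x assume "x \<in> strip (a + m) (b + m)"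
  then have "x - vector [m, 0] \<in> strip a b" "x = (x - vector [m, 0]) + vector [m, 0]"
    by (auto simp: strip_def)
  then show "x \<in> (\<lambda>x. x + vector [m, 0]) ` strip a b"
    by blast
qed (auto simp: strip_def)

lemma not_free_wide_open_strip:
  assumes K: "open_strip a b \<subseteq> rel_interior K" and s: "s \<in> A" "0 \<in> A" "a < s" "s + 1 < b"
  shows "\<not> free A Delta2 K"
proof -
  let ?T = "\<lambda>x. x + vector [s, 0] :: real^2"
  have T: "unimodular_map A ?T"
    by (rule unimodular_map_translation) (use s in \<open>simp add: forall_2\<close>)
  have "?T ` Delta2 \<subseteq> open_strip a b"
    by (rule unimodular_Delta2_subset[OF T convex_open_strip]) (use s in \<open>auto simp: open_strip_def\<close>)
  then show ?thesis
    using T K unfolding free_def by blast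
qed

lemma lineality_open_strip_subset_interior:
  assumes C: "convex C" "lineality_direction (axis 2 1) C" "interior C \<noteq> {}"
    and x: "x \<in> C" and y: "y \<in> C"
  shows "open_strip (x$1) (y$1) \<subseteq> interior C"
proof
  fix w assume w: "w \<in> open_strip (x$1) (y$1)"
  obtain c where c: "c \<in> interior C"
    using C(3) by blast
  have "\<exists>z \<in> interior C. z$1 = w$1"
  proof (cases "c$1 \<le> w$1")
    case True
    define u where "u = (y$1 - w$1) / (y$1 - c$1)"
    have u: "0 < u" "u \<le> 1" "u * (y$1 - c$1) = y$1 - w$1"
      using True w unfolding u_def open_strip_def by auto
    have "y - u *\<^sub>R (y - c) \<in> interior C"
      by (rule mem_interior_convex_shrink[OF C(1) c y]) (use u in auto)
    moreover have "(y - u *\<^sub>R (y - c))$1 = w$1"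
      using u(3) by (simp add: algebra_simps)
    ultimately show ?thesis
      by blast
  next
    case False
    define u where "u = (w$1 - x$1) / (c$1 - x$1)"
    have u: "0 < u" "u \<le> 1" "u * (c$1 - x$1) = w$1 - x$1"
      using False w unfolding u_def open_strip_def by auto
    have "x - u *\<^sub>R (x - c) \<in> interior C"
      by (rule mem_interior_convex_shrink[OF C(1) c x]) (use u in auto)
    moreover have "(x - u *\<^sub>R (x - c))$1 = w$1"
      using u(3) by (simp add: algebra_simps)
    ultimately show ?thesis
      by blast
  qed
  then obtain z where z: "z \<in> interior C" "z$1 = w$1"
    by blast
  have "z + (w$2 - z$2) *\<^sub>R axis 2 1 \<in> interior C"
    by (rule translation_mem_interior[OF _ z(1)]) (use C(2) in \<open>simp add: lineality_direction_def\<close>)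
  moreover have "z + (w$2 - z$2) *\<^sub>R axis 2 1 = w"
    using z(2) by (simp add: vec_eq_iff forall_2)
  ultimately show "w \<in> interior C"
    by simp
qed

lemma unimodular_Delta2_in_open_strip:
  assumes "unimodular_map A T" "T ` Delta2 \<subseteq> open_strip lo hi"
  obtains M :: "real^2^2" and b :: "real^2" where "\<forall>i j. M $ i $ j \<in> \<int>" "\<bar>det M\<bar> = 1" "b$1 \<in> A"
    "lo < b$1" "b$1 < hi" "lo < M$1$1 + b$1" "M$1$1 + b$1 < hi" "lo < M$1$2 + b$1" "M$1$2 + b$1 < hi"
proof -
  obtain M b where M: "\<forall>i j. M $ i $ j \<in> \<int>" "\<bar>det M\<bar> = 1" "\<forall>i. b $ i \<in> A"
    "T = (\<lambda>x. M *v x + b)"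
    using assms(1) unfolding unimodular_map_def by blast
  have "T 0 \<in> open_strip lo hi" "T (axis 1 1) \<in> open_strip lo hi" "T (axis 2 1) \<in> open_strip lo hi"
    using assms(2) Delta2_vertices by (simp_all add: image_subset_iff)
  then show ?thesis
    by (intro that[OF M(1,2), of b]) (use M(3) in \<open>simp_all add: M(4) open_strip_def matrix_vector_mult_nth_2\<close>)
qed

lemma free_strip_Ints: "free \<int> Delta2 (strip (-1) 1)"
proof -
  have "\<not> T ` Delta2 \<subseteq> open_strip (-1) 1" if T: "unimodular_map \<int> T" for T
  proof
    assume "T ` Delta2 \<subseteq> open_strip (-1) 1"
    then obtain M :: "real^2^2" and b :: "real^2" where M: "\<forall>i j. M $ i $ j \<in> \<int>" "\<bar>det M\<bar> = 1"
      "b$1 \<in> \<int>" "-1 < b$1" "b$1 < 1" "-1 < M$1$1 + b$1" "M$1$1 + b$1 < 1" "-1 < M$1$2 + b$1" "M$1$2 + b$1 < 1"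
      by (rule unimodular_Delta2_in_open_strip[OF T])
    then have "b$1 = 0" "M$1$1 + b$1 = 0" "M$1$2 + b$1 = 0"
      by (auto intro!: Ints_abs_less_one)
    then show False
      using M(2) by (simp add: det_2)
  qed
  then show ?thesis
    unfolding free_def by (simp add: rel_interior_strip)
qed

lemma free_strip_UNIV: "free UNIV Delta2 (strip 0 1)"
proof -
  have "\<not> T ` Delta2 \<subseteq> open_strip 0 1" if T: "unimodular_map UNIV T" for T
  proof
    assume "T ` Delta2 \<subseteq> open_strip 0 1"
    then obtain M :: "real^2^2" and b :: "real^2" where M: "\<forall>i j. M $ i $ j \<in> \<int>" "\<bar>det M\<bar> = 1"
      "b$1 \<in> UNIV" "0 < b$1" "b$1 < 1" "0 < M$1$1 + b$1" "M$1$1 + b$1 < 1" "0 < M$1$2 + b$1" "M$1$2 + b$1 < 1"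
      by (rule unimodular_Delta2_in_open_strip[OF T])
    then have "M$1$1 = 0" "M$1$2 = 0"
      by (auto intro!: Ints_abs_less_one)
    then show False
      using M(2) by (simp add: det_2)
  qed
  then show ?thesis
    unfolding free_def by (simp add: rel_interior_strip)
qed

lemma closed_convex_superset_strip:
  assumes K: "closed K" "convex K" "strip a b \<subseteq> K" "a < b" and p: "p \<in> K" "p \<notin> strip a b"
  obtains "b < p$1" "open_strip a (p$1) \<subseteq> rel_interior K"
    | "p$1 < a" "open_strip (p$1) b \<subseteq> rel_interior K"
proof -
  have on_strip: "vector [a, t] \<in> K" "vector [b, t] \<in> K" for t
    using K(3,4) by (auto simp: strip_def)
  have "vector [a, 0] + t *\<^sub>R axis 2 1 = (vector [a, t] :: real^2)"
    "vector [a, 0] + t *\<^sub>R (- axis 2 1) = (vector [a, - t] :: real^2)" for t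
    by (simp_all add: vec_eq_iff forall_2)
  then have "recession_direction (axis 2 1) K" "recession_direction (- axis 2 1) K"
    using recession_direction_closed_convex[OF K(1,2) on_strip(1)[of 0]] on_strip(1) by simp_all
  then have line: "lineality_direction (axis 2 1) K"
    by (simp add: lineality_direction_iff)
  have "interior K \<noteq> {}"
    using interior_mono[OF K(3)] interior_strip open_strip_nonempty[OF K(4)] by blast
  then have ri: "rel_interior K = interior K"
    by (rule rel_interior_nonempty_interior)
  have "b < p$1 \<or> p$1 < a"
    using p(2) K(4) by (auto simp: strip_def)
  then show ?thesis
  proof
    assume "b < p$1"
    moreover have "open_strip a (p$1) \<subseteq> rel_interior K"
      using lineality_open_strip_subset_interior[OF K(2) line \<open>interior K \<noteq> {}\<close> on_strip(1) p(1)]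
      by (simp add: ri)
    ultimately show ?thesis
      using that(1) by blast
  next
    assume "p$1 < a"
    moreover have "open_strip (p$1) b \<subseteq> rel_interior K"
      using lineality_open_strip_subset_interior[OF K(2) line \<open>interior K \<noteq> {}\<close> p(1) on_strip(2)]
      by (simp add: ri)
    ultimately show ?thesis
      using that(2) by blast
  qed
qed

lemma maximal_free_eq:
  "maximal_free A X C \<Longrightarrow> closed K \<Longrightarrow> convex K \<Longrightarrow> free A X K \<Longrightarrow> C \<subseteq> K \<Longrightarrow> C = K"
  unfolding maximal_free_def by metis

lemma maximal_free_strip_Ints: "maximal_free \<int> Delta2 (strip (-1) 1)"
  unfolding maximal_free_def
proof (intro conjI allI impI closed_strip convex_strip free_strip_Ints)
  fix K assume K: "closed K \<and> convex K \<and> free \<int> Delta2 K \<and> strip (-1) 1 \<subseteq> K"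
  have "p \<in> strip (-1) 1" if p: "p \<in> K" for p
  proof (rule ccontr)
    assume "p \<notin> strip (-1) 1"
    then consider "1 < p$1" "open_strip (-1) (p$1) \<subseteq> rel_interior K"
      | "p$1 < -1" "open_strip (p$1) 1 \<subseteq> rel_interior K"
      using closed_convex_superset_strip[of K "-1" 1 p] K p by auto
    then show False
    proof cases
      assume "1 < p$1" "open_strip (-1) (p$1) \<subseteq> rel_interior K"
      then show False
        using not_free_wide_open_strip[of "-1" "p$1" K 0 \<int>] K by simp
    next
      assume "p$1 < -1" "open_strip (p$1) 1 \<subseteq> rel_interior K"
      then show False
        using not_free_wide_open_strip[of "p$1" 1 K "-1" \<int>] K by simp
    qed
  qed
  then show "K = strip (-1) 1"
    using K by blast
qed

lemma maximal_free_strip_UNIV: "maximal_free UNIV Delta2 (strip 0 1)"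
  unfolding maximal_free_def
proof (intro conjI allI impI closed_strip convex_strip free_strip_UNIV)
  fix K assume K: "closed K \<and> convex K \<and> free UNIV Delta2 K \<and> strip 0 1 \<subseteq> K"
  have "p \<in> strip 0 1" if p: "p \<in> K" for p
  proof (rule ccontr)
    assume "p \<notin> strip 0 1"
    then consider "1 < p$1" "open_strip 0 (p$1) \<subseteq> rel_interior K"
      | "p$1 < 0" "open_strip (p$1) 1 \<subseteq> rel_interior K"
      using closed_convex_superset_strip[of K "0" 1 p] K p by auto
    then show False
    proof cases
      assume "1 < p$1" "open_strip 0 (p$1) \<subseteq> rel_interior K"
      then show False
        using not_free_wide_open_strip[of 0 "p$1" K "(p$1 - 1) / 2" UNIV] K by (simp add: field_simps)
    next
      assume "p$1 < 0" "open_strip (p$1) 1 \<subseteq> rel_interior K"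
      then show False
        using not_free_wide_open_strip[of "p$1" 1 K "p$1 / 2" UNIV] K by simp
    qed
  qed
  then show "K = strip 0 1"
    using K by blast
qed

lemma strip_lattice_direction_width:
  assumes "a \<le> b" "\<forall>i. u $ i \<in> \<int>" "u \<noteq> 0"
  obtains x y where "x \<in> strip a b" "y \<in> strip a b" "b - a \<le> \<bar>u \<bullet> x - u \<bullet> y\<bar>"
proof -
  consider "u$1 \<noteq> 0" | "u$1 = 0" "u$2 \<noteq> 0"
    using assms(3) by (auto simp: vec_eq_iff forall_2)
  then show ?thesis
  proof cases
    case 1
    then have "1 \<le> \<bar>u$1\<bar>"
      using assms(2) Ints_abs_less_one by force
    then have "b - a \<le> \<bar>u$1\<bar> * (b - a)"
      using assms(1) by (simp add: mult_le_cancel_right1)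
    also have "\<dots> = \<bar>u \<bullet> vector [b, 0] - u \<bullet> vector [a, 0]\<bar>"
    proof -
      have "u \<bullet> vector [b, 0] - u \<bullet> vector [a, 0] = u$1 * (b - a)"
        by (simp add: inner_2 algebra_simps)
      then show ?thesis
        using assms(1) by (simp add: abs_mult)
    qed
    finally show ?thesis
      using assms(1) by (intro that[of "vector [b, 0]" "vector [a, 0]"]) (simp_all add: strip_def)
  next
    case 2
    then have "1 \<le> \<bar>u$2\<bar>"
      using assms(2) Ints_abs_less_one by force
    then have "b - a \<le> \<bar>u$2\<bar> * (b - a)"
      using assms(1) by (simp add: mult_le_cancel_right1)
    also have "\<dots> = \<bar>u \<bullet> vector [a, b - a] - u \<bullet> vector [a, 0]\<bar>"
    proof -
      have "u \<bullet> vector [a, b - a] - u \<bullet> vector [a, 0] = u$2 * (b - a)"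
        using 2 by (simp add: inner_2 algebra_simps)
      then show ?thesis
        using assms(1) by (simp add: abs_mult)
    qed
    finally show ?thesis
      using assms(1) by (intro that[of "vector [a, b - a]" "vector [a, 0]"]) (simp_all add: strip_def)
  qed
qed

lemma lattice_width_strip:
  assumes "a \<le> b"
  shows "lattice_width (strip a b) = ereal (b - a)"
  unfolding lattice_width_def
proof (rule antisym)
  let ?U = "{u::real^2. (\<forall>i. u $ i \<in> \<int>) \<and> u \<noteq> 0}"
  let ?w = "\<lambda>u. SUP p\<in>strip a b \<times> strip a b. ereal \<bar>u \<bullet> fst p - u \<bullet> snd p\<bar>"
  have e1: "(vector [1, 0] :: real^2) \<in> ?U"
    by (auto simp: forall_2 vec_eq_iff)
  have "?w (vector [1, 0]) \<le> ereal (b - a)"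
    by (rule SUP_least) (auto simp: inner_2 strip_def)
  then show "(INF u\<in>?U. ?w u) \<le> ereal (b - a)"
    by (rule INF_lower2[OF e1])
  show "ereal (b - a) \<le> (INF u\<in>?U. ?w u)"
  proof (rule INF_greatest)
    fix u assume "u \<in> ?U"
    then obtain x y where "x \<in> strip a b" "y \<in> strip a b" "b - a \<le> \<bar>u \<bullet> x - u \<bullet> y\<bar>"
      using strip_lattice_direction_width[OF assms] by blast
    then show "ereal (b - a) \<le> ?w u"
      by (intro SUP_upper2[of "(x, y)"]) auto
  qed
qed

section \<open>The lineality direction of an unbounded maximal free set\<close>

lemma integer_vector_near_ray:
  fixes d :: "real^2"
  assumes "r > 0"
  obtains z s where "\<forall>i. z$i \<in> \<int>" "S \<le> s" "norm (z - s *\<^sub>R d) < r"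
proof -
  define S' where "S' = max S 1"
  obtain N :: nat where N: "2 / r < real N"
    using reals_Archimedean2 by blast
  moreover have "0 \<le> 2 / r"
    using assms by simp
  ultimately have "N > 0"
    by linarith
  then obtain q p where q: "0 < q"
    and p: "\<And>i::nat. i < 2 \<Longrightarrow> \<bar>of_int q * (S' * (if i = 0 then d$1 else d$2)) - of_int (p i)\<bar> < 1 / N"
    using Dirichlet_approx_simult[where \<theta>="\<lambda>i. S' * (if i = 0 then d$1 else d$2)" and n=2] by metis
  define z :: "real^2" where "z = vector [of_int (p 0), of_int (p 1)]"
  define s where "s = of_int q * S'"
  have "\<forall>i. z$i \<in> \<int>"
    by (simp add: z_def forall_2)
  moreover have "S' \<le> s"
    using q unfolding s_def S'_def by (simp add: mult_le_cancel_right1)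
  then have "S \<le> s"
    unfolding S'_def by linarith
  moreover have "norm (z - s *\<^sub>R d) < r"
  proof -
    have "\<bar>(z - s *\<^sub>R d)$1\<bar> < 1 / N" "\<bar>(z - s *\<^sub>R d)$2\<bar> < 1 / N"
      using p[of 0] p[of 1] by (simp_all add: z_def s_def abs_minus_commute mult.assoc)
    then have "norm (z - s *\<^sub>R d) < 2 / N"
      using norm_le_abs_nth_2[of "z - s *\<^sub>R d"] by simp
    also have "2 / N < r"
      using N assms \<open>N > 0\<close> by (simp add: field_simps)
    finally show ?thesis .
  qed
  ultimately show ?thesis
    using that by blast
qed

lemma recession_shift_into_interior:
  fixes C :: "'a::real_normed_vector set"
  assumes rec: "recession_direction d C" and v: "v \<in> interior C + range (\<lambda>t. t *\<^sub>R d)"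
  shows "\<exists>r>0. \<exists>S. \<forall>z s. S \<le> s \<longrightarrow> norm (z - s *\<^sub>R d) < r \<longrightarrow> v + z \<in> interior C"
proof -
  obtain c t where c: "c \<in> interior C" "v = c + t *\<^sub>R d"
    using v by (auto simp: set_plus_def)
  obtain r where r: "r > 0" "ball c r \<subseteq> interior C"
    using c(1) open_interior open_contains_ball by blast
  have "v + z \<in> interior C" if s: "- t \<le> s" "norm (z - s *\<^sub>R d) < r" for z s
  proof -
    have "dist c (c + (z - s *\<^sub>R d)) < r"
      using s(2) by (simp add: dist_norm norm_minus_commute)
    then have "c + (z - s *\<^sub>R d) \<in> interior C"
      using r(2) by auto
    then have "c + (z - s *\<^sub>R d) + (s + t) *\<^sub>R d \<in> interior C"
      by (rule translation_mem_interior[rotated]) (use rec s(1) in \<open>simp add: recession_direction_def\<close>)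
    then show ?thesis
      using c(2) by (simp add: algebra_simps)
  qed
  then show ?thesis
    using r(1) by blast
qed

lemma integer_shift_into_interior:
  fixes C :: "(real^2) set"
  assumes rec: "recession_direction d C"
    and P: "finite P" "P \<subseteq> interior C + range (\<lambda>t. t *\<^sub>R d)"
  obtains z where "\<forall>i. z$i \<in> \<int>" "(\<lambda>v. v + z) ` P \<subseteq> interior C"
proof -
  have "\<forall>v\<in>P. \<exists>r>0. \<exists>S. \<forall>z s. S \<le> s \<longrightarrow> norm (z - s *\<^sub>R d) < r \<longrightarrow> v + z \<in> interior C"
    using recession_shift_into_interior[OF rec] P(2) by blast
  then obtain r S where rS: "\<And>v. v \<in> P \<Longrightarrow> r v > 0"
    "\<And>v z s. v \<in> P \<Longrightarrow> S v \<le> s \<Longrightarrow> norm (z - s *\<^sub>R d) < r v \<Longrightarrow> v + z \<in> interior C"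
    by metis
  define r0 where "r0 = Min (insert 1 (r ` P))"
  define S0 where "S0 = Max (insert 0 (S ` P))"
  have "r0 > 0"
    unfolding r0_def using P(1) rS(1) by simp
  then obtain z s where z: "\<forall>i. z$i \<in> \<int>" "S0 \<le> s" "norm (z - s *\<^sub>R d) < r0"
    by (rule integer_vector_near_ray)
  have "v + z \<in> interior C" if v: "v \<in> P" for v
  proof (rule rS(2)[OF v])
    have "S v \<le> S0"
      unfolding S0_def using P(1) v by (intro Max_ge) auto
    then show "S v \<le> s"
      using z(2) by linarith
    have "r0 \<le> r v"
      unfolding r0_def using P(1) v by (intro Min_le) auto
    then show "norm (z - s *\<^sub>R d) < r v"
      using z(3) by linarith
  qed
  then show ?thesis
    using that z(1) by blast
qed

lemma rel_interior_closure_plus_line: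
  fixes C :: "'a::euclidean_space set"
  assumes "convex C" "aff_dim C = DIM('a)"
  shows "rel_interior (closure (C + range (\<lambda>t. t *\<^sub>R d))) = interior C + range (\<lambda>t. t *\<^sub>R d)"
proof -
  have L: "range (\<lambda>t. t *\<^sub>R d) = span {d}"
    by (simp add: span_singleton)
  have convex_L: "convex (span {d})" and rel_interior_L: "rel_interior (span {d}) = span {d}"
    by (simp_all add: subspace_imp_convex rel_interior_affine subspace_imp_affine)
  have "rel_interior (closure (C + span {d})) = rel_interior (C + span {d})"
    by (rule convex_rel_interior_closure[OF convex_set_plus[OF assms(1) convex_L]])
  also have "\<dots> = interior C + span {d}"
    using rel_interior_sum[OF assms(1) convex_L] rel_interior_L interior_rel_interior[OF assms(2)] by simp
  finally show ?thesis
    unfolding L .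
qed

lemma interior_nonempty_full_aff_dim:
  fixes C :: "'a::euclidean_space set"
  assumes "convex C" "aff_dim C = DIM('a)"
  shows "interior C \<noteq> {}"
proof -
  have "C \<noteq> {}"
    using assms(2) by auto
  then show ?thesis
    using rel_interior_eq_empty[OF assms(1)] interior_rel_interior[OF assms(2)] by simp
qed

definition wedge :: "real^2 \<Rightarrow> real^2 \<Rightarrow> real" where
  "wedge u v = u$1 * v$2 - u$2 * v$1"

lemma wedge_diff: "wedge d (x - y) = wedge d x - wedge d y"
  by (simp add: wedge_def algebra_simps)

lemma wedge_eq_0_parallel:
  assumes "d \<noteq> 0" "wedge d v = 0"
  obtains c where "v = c *\<^sub>R d"
proof (cases "d$1 = 0")
  case True
  then have "d$2 \<noteq> 0"
    using assms(1) by (auto simp: vec_eq_iff forall_2)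
  then show ?thesis
    using assms(2) True by (intro that[of "v$2 / d$2"]) (auto simp: wedge_def vec_eq_iff forall_2)
next
  case False
  then show ?thesis
    using assms(2) by (intro that[of "v$1 / d$1"]) (auto simp: wedge_def vec_eq_iff forall_2 field_simps)
qed

lemma wedge_decomposition:
  assumes "d \<noteq> 0"
  shows "w = (wedge d w / (d \<bullet> d)) *\<^sub>R vector [- d$2, d$1] + ((d \<bullet> w) / (d \<bullet> d)) *\<^sub>R d"
proof -
  define n where "n = d \<bullet> d"
  have n: "n \<noteq> 0" "n = d$1 * d$1 + d$2 * d$2"
    using assms unfolding n_def by (simp, simp add: inner_2)
  have "wedge d w * (- d$2) + (d \<bullet> w) * d$1 = w$1 * n" "wedge d w * d$1 + (d \<bullet> w) * d$2 = w$2 * n"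
    by (simp_all add: n(2) wedge_def inner_2 algebra_simps)
  then show ?thesis
    using n(1) unfolding n_def[symmetric] by (simp add: vec_eq_iff forall_2 field_simps)
qed

lemma norm_rotate_2: "norm (vector [- d$2, d$1] :: real^2) = norm (d :: real^2)"
  by (simp add: norm_vec_def L2_set_def sum_2 add.commute)

lemma lineality_wedge_slab_interior:
  assumes line: "lineality_direction d C" and d: "d \<noteq> 0" and c: "c \<in> interior C"
  obtains \<rho> where "\<rho> > 0" "\<And>x. \<bar>wedge d x - wedge d c\<bar> < \<rho> \<Longrightarrow> x \<in> interior C"
proof -
  obtain r where r: "r > 0" "ball c r \<subseteq> interior C"
    using c open_interior open_contains_ball by blast
  have nd: "norm d > 0"
    using d by simp
  have "x \<in> interior C" if x: "\<bar>wedge d x - wedge d c\<bar> < r * norm d" for x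
  proof -
    let ?n = "vector [- d$2, d$1] :: real^2"
    define \<beta> where "\<beta> = wedge d (x - c) / (d \<bullet> d)"
    define \<alpha> where "\<alpha> = (d \<bullet> (x - c)) / (d \<bullet> d)"
    have "norm (\<beta> *\<^sub>R ?n) = \<bar>\<beta>\<bar> * norm d"
      using norm_rotate_2[of d] by simp
    also have "\<dots> = \<bar>wedge d x - wedge d c\<bar> / norm d"
      using nd by (simp add: \<beta>_def wedge_diff abs_div dot_square_norm power2_eq_square)
    also have "\<dots> < r"
      using x nd by (simp add: divide_less_eq)
    finally have "c + \<beta> *\<^sub>R ?n \<in> interior C"
      using r(2) by (auto simp: dist_norm)
    then have "c + \<beta> *\<^sub>R ?n + \<alpha> *\<^sub>R d \<in> interior C"
      by (rule translation_mem_interior[rotated]) (use line in \<open>simp add: lineality_direction_def\<close>)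
    moreover have "c + \<beta> *\<^sub>R ?n + \<alpha> *\<^sub>R d = x"
      using wedge_decomposition[OF d, of "x - c"] unfolding \<alpha>_def \<beta>_def by (simp add: algebra_simps)
    ultimately show ?thesis
      by simp
  qed
  then show ?thesis
    using that[of "r * norm d"] r(1) nd by simp
qed

lemma primitive_vector_small_wedge:
  assumes "\<rho> > 0"
  obtains p q :: int where "coprime p q" "0 \<le> wedge d (vector [of_int p, of_int q])" "wedge d (vector [of_int p, of_int q]) < \<rho>"
proof (cases "d$1 = 0")
  case True
  then show ?thesis
    using that[of 0 1] assms by (simp add: wedge_def)
next
  case False
  obtain N :: nat where N: "\<bar>d$1\<bar> / \<rho> < real N"
    using reals_Archimedean2 by blast
  then have "N > 0"
    using assms by (smt (verit) divide_nonneg_pos of_nat_0 of_nat_0_less_iff abs_ge_zero)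
  then obtain h k where hk: "coprime h k" "\<bar>of_int k * (d$2 / d$1) - of_int h\<bar> < 1 / N"
    using Dirichlet_approx_coprime by metis
  have w: "wedge d (vector [of_int k, of_int h]) = - d$1 * (of_int k * (d$2 / d$1) - of_int h)"
    using False by (simp add: wedge_def field_simps)
  have "\<bar>wedge d (vector [of_int k, of_int h])\<bar> < \<bar>d$1\<bar> * (1 / N)"
    unfolding w abs_mult abs_minus_cancel using hk(2) False by (intro mult_strict_left_mono) auto
  also have "\<dots> < \<rho>"
    using N assms \<open>N > 0\<close> by (simp add: field_simps)
  finally have small: "\<bar>wedge d (vector [of_int k, of_int h])\<bar> < \<rho>" .
  have "wedge d (vector [of_int (- k), of_int (- h)]) = - wedge d (vector [of_int k, of_int h])"
    by (simp add: wedge_def)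
  moreover have "coprime k h" "coprime (- k) (- h)"
    using hk(1) by (simp_all add: coprime_commute)
  ultimately show ?thesis
    using that[of k h] that[of "- k" "- h"] small by (cases "0 \<le> wedge d (vector [of_int k, of_int h])") auto
qed

lemma coprime_completion:
  fixes p q :: int
  assumes "coprime p q"
  obtains a b where "p * b - q * a = 1"
proof -
  obtain u v where "u * p + v * q = gcd p q"
    using bezout_int by blast
  then have "p * u - q * (- v) = 1"
    using assms by (simp add: coprime_iff_gcd_eq_1 algebra_simps)
  then show ?thesis
    by (rule that)
qed

context translation_group
begin

lemma free_closure_plus_recession_line:
  assumes C: "free A Delta2 C" "convex C" "aff_dim C = 2" and rec: "recession_direction d C"
  shows "free A Delta2 (closure (C + range (\<lambda>t. t *\<^sub>R d)))"
  unfolding free_def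
proof
  let ?L = "range (\<lambda>t. t *\<^sub>R d)"
  assume "\<exists>T. unimodular_map A T \<and> T ` Delta2 \<subseteq> rel_interior (closure (C + ?L))"
  then obtain T where T: "unimodular_map A T" "T ` Delta2 \<subseteq> interior C + ?L"
    using rel_interior_closure_plus_line[OF C(2)] C(3) by auto
  let ?V = "{0, axis 1 1, axis 2 1}"
  have "finite (T ` ?V)" "T ` ?V \<subseteq> interior C + ?L"
    using T(2) Delta2_vertices by auto
  then obtain z where z: "\<forall>i. z$i \<in> \<int>" "(\<lambda>v. v + z) ` T ` ?V \<subseteq> interior C"
    by (rule integer_shift_into_interior[OF rec])
  have "unimodular_map A ((\<lambda>v. v + z) \<circ> T)"
    using unimodular_map_comp[OF T(1) unimodular_map_translation] z(1) Ints_subset by blast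
  moreover have "((\<lambda>v. v + z) \<circ> T) ` ?V \<subseteq> rel_interior C"
    using z(2) interior_rel_interior[of C] C(3) by (simp add: image_comp)
  ultimately show False
    using free_Delta2_vertices[OF C(1,2)] by blast
qed

lemma maximal_free_lineality:
  assumes C: "maximal_free A Delta2 C" "aff_dim C = 2" and rec: "recession_direction d C"
  shows "lineality_direction d C"
proof -
  define D where "D = closure (C + range (\<lambda>t. t *\<^sub>R d))"
  have C_props: "closed C" "convex C" "free A Delta2 C"
    using C(1) unfolding maximal_free_def by blast+
  have line_D: "x + t *\<^sub>R d \<in> D" if "x \<in> C" for x t
  proof -
    have "x + t *\<^sub>R d \<in> C + range (\<lambda>t. t *\<^sub>R d)"
      using that by (intro set_plus_intro) auto
    then show ?thesis
      using closure_subset unfolding D_def by blast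
  qed
  have "free A Delta2 D"
    unfolding D_def using free_closure_plus_recession_line[OF C_props(3,2) C(2) rec] .
  moreover have "closed D" "convex D"
    unfolding D_def span_singleton[symmetric] using C_props(2)
    by (simp_all add: convex_closure convex_set_plus subspace_imp_convex)
  moreover have "C \<subseteq> D"
    using line_D[of _ 0] by auto
  ultimately have "C = D"
    using maximal_free_eq[OF C(1)] by blast
  then show ?thesis
    using line_D unfolding lineality_direction_def by blast
qed

text \<open>With \<open>h = wedge d (p, q) > 0\<close> and a lattice complement \<open>(a, b)\<close> of \<open>(p, q)\<close>, the unimodular
  triangle with vertices \<open>m (p, q)\<close>, \<open>(m + 1) (p, q)\<close> and \<open>m (p, q) + (a, b) - k (p, q)\<close> has, for
  suitable integers \<open>k\<close> and \<open>m\<close>, all its \<open>wedge d\<close>-values in \<open>[wedge d c, wedge d c + 2 h)\<close>.\<close>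
lemma free_wedge_not_small:
  assumes C: "free A Delta2 C" "convex C" "rel_interior C = interior C"
    and slab: "\<And>x. \<bar>wedge d x - wedge d c\<bar> < \<rho> \<Longrightarrow> x \<in> interior C"
    and pq: "coprime p q" and h: "0 < wedge d (vector [of_int p, of_int q])" "wedge d (vector [of_int p, of_int q]) < \<rho> / 2"
  shows False
proof -
  define h where "h = wedge d (vector [of_int p, of_int q])"
  obtain a b :: int where ab: "p * b - q * a = 1"
    using coprime_completion[OF pq] by blast
  define k where "k = \<lfloor>wedge d (vector [of_int a, of_int b]) / h\<rfloor>"
  define m where "m = \<lceil>wedge d c / h\<rceil>"
  have h_pos: "0 < h"
    using h(1) unfolding h_def .
  have k: "k * h \<le> wedge d (vector [of_int a, of_int b])" "wedge d (vector [of_int a, of_int b]) < (k + 1) * h"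
    unfolding k_def using floor_divide_lower[OF h_pos] floor_divide_upper[OF h_pos] by auto
  have m: "wedge d c \<le> m * h" "(m - 1) * h < wedge d c"
    unfolding m_def using ceiling_divide_upper[OF h_pos] ceiling_divide_lower[OF h_pos] by auto
  let ?T = "\<lambda>x::real^2. vector [of_int p * x$1 + of_int (a - k * p) * x$2 + of_int (m * p),
                                 of_int q * x$1 + of_int (b - k * q) * x$2 + of_int (m * q)] :: real^2"
  have "p * (b - k * q) - (a - k * p) * q = 1"
    using ab by (simp add: algebra_simps)
  then have "\<bar>of_int p * of_int (b - k * q) - of_int (a - k * p) * of_int q\<bar> = (1::real)"
    by (metis abs_one of_int_1 of_int_diff of_int_mult)
  then have T: "unimodular_map A ?T"
    by (intro unimodular_mapI) (use Ints_subset in auto)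
  have wedge_T: "wedge d (?T x) = (x$1 + m) * h + x$2 * (wedge d (vector [of_int a, of_int b]) - k * h)" for x
    by (simp add: wedge_def h_def algebra_simps)
  have "?T v \<in> rel_interior C" if "v \<in> {0, axis 1 1, axis 2 1}" for v
  proof -
    have "\<bar>wedge d (?T v) - wedge d c\<bar> < \<rho>"
      using that wedge_T[of v] k m h(2) h_pos unfolding h_def[symmetric] by (auto simp: algebra_simps)
    then show ?thesis
      using slab C(3) by blast
  qed
  then show False
    using free_Delta2_vertices[OF C(1,2) T] by blast
qed

lemma free_lineality_direction_rational:
  assumes C: "free A Delta2 C" "convex C" "interior C \<noteq> {}" "lineality_direction d C" and d: "d \<noteq> 0"
  obtains p q :: int where "coprime p q" "wedge d (vector [of_int p, of_int q]) = 0"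
proof -
  obtain c where c: "c \<in> interior C"
    using C(3) by blast
  obtain \<rho> where \<rho>: "\<rho> > 0" "\<And>x. \<bar>wedge d x - wedge d c\<bar> < \<rho> \<Longrightarrow> x \<in> interior C"
    using lineality_wedge_slab_interior[OF C(4) d c] by blast
  obtain p q :: int where pq: "coprime p q" "0 \<le> wedge d (vector [of_int p, of_int q])" "wedge d (vector [of_int p, of_int q]) < \<rho> / 2"
    using primitive_vector_small_wedge[of "\<rho> / 2"] \<rho>(1) by auto
  have "rel_interior C = interior C"
    using C(3) by (rule rel_interior_nonempty_interior)
  then have "\<not> 0 < wedge d (vector [of_int p, of_int q])"
    using free_wedge_not_small[OF C(1,2) _ \<rho>(2) pq(1)] pq(3) by blast
  then show ?thesis
    using that pq by simp
qed

lemma lineality_primitive_normal_form: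
  assumes pq: "coprime p q" and C: "lineality_direction (vector [of_int p, of_int q]) C"
  obtains T C' where "unimodular_map A T" "C = T ` C'" "lineality_direction (axis 2 1) C'"
proof -
  obtain a b :: int where ab: "p * b - q * a = 1"
    using coprime_completion[OF pq] by blast
  let ?T = "\<lambda>x::real^2. vector [of_int a * x$1 + of_int p * x$2 + 0, of_int b * x$1 + of_int q * x$2 + 0] :: real^2"
  have "\<bar>of_int a * of_int q - of_int p * of_int b\<bar> = (1::real)"
    using arg_cong[OF ab, of "\<lambda>n. \<bar>real_of_int n\<bar>"] by (simp add: algebra_simps)
  then have T: "unimodular_map A ?T"
    by (intro unimodular_mapI) (use Ints_subset in auto)
  obtain S where S: "unimodular_map A S" "\<And>x. S (?T x) = x" "\<And>x. ?T (S x) = x"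
    using unimodular_map_inverse[OF T] by blast
  have shift: "?T (x + t *\<^sub>R axis 2 1) = ?T x + t *\<^sub>R vector [of_int p, of_int q]" for x t
    by (simp add: vec_eq_iff forall_2 algebra_simps)
  have "lineality_direction (axis 2 1) (S ` C)"
    unfolding lineality_direction_def
  proof (intro ballI allI)
    fix x t assume "x \<in> S ` C"
    then obtain y where y: "y \<in> C" "x = S y"
      by blast
    then have "?T (x + t *\<^sub>R axis 2 1) \<in> C"
      using C S(3) unfolding shift lineality_direction_def by simp
    then show "x + t *\<^sub>R axis 2 1 \<in> S ` C"
      using S(2) by (metis image_eqI)
  qed
  moreover have "C = ?T ` S ` C"
    by (simp only: image_image S(3) image_ident)
  ultimately show ?thesis
    using that T by blast
qed

lemma unbounded_maximal_free_normal_form: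
  assumes C: "closed C" "convex C" "\<not> bounded C" "aff_dim C = 2" "maximal_free A Delta2 C"
  obtains T C' where "unimodular_map A T" "C = T ` C'" "convex C'" "maximal_free A Delta2 C'"
    "interior C' \<noteq> {}" "lineality_direction (axis 2 1) C'"
proof -
  obtain d where d: "d \<noteq> 0" "recession_direction d C"
    using unbounded_closed_convex_recession_direction[OF C(1-3)] by blast
  have line: "lineality_direction d C"
    using maximal_free_lineality[OF C(5,4) d(2)] .
  have "free A Delta2 C" "interior C \<noteq> {}"
    using C(5) interior_nonempty_full_aff_dim[OF C(2)] C(4) unfolding maximal_free_def by auto
  then obtain p q :: int where pq: "coprime p q" "wedge d (vector [of_int p, of_int q]) = 0"
    using free_lineality_direction_rational[OF _ C(2) _ line d(1)] by blast
  then obtain c where "vector [of_int p, of_int q] = c *\<^sub>R d"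
    using wedge_eq_0_parallel[OF d(1)] by blast
  then have "lineality_direction (vector [of_int p, of_int q]) C"
    using lineality_direction_scaleR[OF line] by simp
  then obtain T C' where T: "unimodular_map A T" "C = T ` C'" "lineality_direction (axis 2 1) C'"
    using lineality_primitive_normal_form[OF pq(1)] by blast
  obtain S where S: "unimodular_map A S" "\<And>x. S (T x) = x"
    using unimodular_map_inverse[OF T(1)] by blast
  have C': "C' = S ` C"
    unfolding T(2) image_image S(2) by simp
  have "convex C'" "maximal_free A Delta2 C'" "aff_dim C' = 2"
    unfolding C' using convex_unimodular_image[OF S(1) C(2)] maximal_free_unimodular_image[OF S(1) C(5)]
      aff_dim_unimodular_image[OF S(1)] C(4) by simp_all
  moreover have "interior C' \<noteq> {}"
    using interior_nonempty_full_aff_dim[of C'] calculation by simp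
  ultimately show ?thesis
    using that T by blast
qed

end

section \<open>Classification\<close>

interpretation Ints: translation_group "\<int>"
  by unfold_locales auto

interpretation reals: translation_group "UNIV"
  by unfold_locales auto

lemma real_set_in_unit_interval:
  fixes X :: "real set"
  assumes "X \<noteq> {}" "\<And>x y. x \<in> X \<Longrightarrow> y \<in> X \<Longrightarrow> y - x \<le> 1"
  obtains a where "X \<subseteq> {a..a + 1}"
proof -
  obtain c where c: "c \<in> X"
    using assms(1) by blast
  have bdd: "bdd_below X"
    by (rule bdd_belowI[of _ "c - 1"]) (use assms(2)[OF _ c] in force)
  have "Inf X \<le> x" "x \<le> Inf X + 1" if "x \<in> X" for x
    using cInf_lower[OF that bdd] cInf_greatest[OF assms(1), of "x - 1"] assms(2)[OF _ that]
    by force+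
  then show ?thesis
    by (intro that[of "Inf X"]) auto
qed

lemma real_set_in_integer_interval:
  fixes X :: "real set"
  assumes "X \<noteq> {}" and gap: "\<And>x y k. x \<in> X \<Longrightarrow> y \<in> X \<Longrightarrow> k \<in> \<int> \<Longrightarrow> x < k \<Longrightarrow> k + 1 < y \<Longrightarrow> False"
  obtains m :: int where "X \<subseteq> {m - 1..m + 1}"
proof -
  obtain c where c: "c \<in> X"
    using assms(1) by blast
  have "c - 2 \<le> x" if x: "x \<in> X" for x
  proof (rule ccontr)
    assume "\<not> c - 2 \<le> x"
    then have "x < of_int (\<lfloor>x\<rfloor> + 1)" "of_int (\<lfloor>x\<rfloor> + 1) + 1 < c"
      using floor_correct[of x] by linarith+
    then show False
      using gap[OF x c, of "of_int (\<lfloor>x\<rfloor> + 1)"] by simp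
  qed
  then have bdd: "bdd_below X"
    by (rule bdd_belowI)
  define m where "m = \<lfloor>Inf X\<rfloor> + 1"
  have m: "real_of_int m - 1 \<le> Inf X" "Inf X < real_of_int m"
    unfolding m_def by linarith+
  have "x \<le> m + 1" if x: "x \<in> X" for x
  proof (rule ccontr)
    assume "\<not> x \<le> m + 1"
    moreover obtain x' where "x' \<in> X" "x' < m"
      using cInf_lessD[OF assms(1) m(2)] by blast
    ultimately show False
      using gap[OF _ x, of x' m] by auto
  qed
  moreover have "real_of_int m - 1 \<le> x" if "x \<in> X" for x
    using cInf_lower[OF that bdd] m(1) by linarith
  ultimately show ?thesis
    by (intro that[of m]) auto
qed

lemma vertical_maximal_free_Ints:
  assumes C: "convex C" "maximal_free \<int> Delta2 C" "interior C \<noteq> {}" "lineality_direction (axis 2 1) C"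
  obtains T where "unimodular_map \<int> T" "C = T ` strip (-1) 1"
proof -
  have fr: "free \<int> Delta2 C"
    using C(2) unfolding maximal_free_def by blast
  have ri: "rel_interior C = interior C"
    using C(3) by (rule rel_interior_nonempty_interior)
  have gap: False if "x \<in> C" "y \<in> C" "k \<in> \<int>" "x$1 < k" "k + 1 < y$1" for x y k
    using not_free_wide_open_strip[of "x$1" "y$1" C k \<int>] fr that ri
      lineality_open_strip_subset_interior[OF C(1,4,3) that(1,2)] by simp
  obtain m :: int where "(\<lambda>x. x$1) ` C \<subseteq> {m - 1..m + 1}"
    by (rule real_set_in_integer_interval[of "(\<lambda>x. x$1) ` C"]) (use C(3) gap in auto)
  then have sub: "C \<subseteq> strip (m - 1) (m + 1)"
    by (auto simp: strip_def)
  let ?T = "\<lambda>x. x + vector [of_int m, 0] :: real^2"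
  have T: "unimodular_map \<int> ?T"
    by (rule unimodular_map_translation) (simp add: forall_2)
  have img: "?T ` strip (-1) 1 = strip (m - 1) (m + 1)"
    using strip_translation[of "of_int m" "-1" 1] by (simp add: add.commute)
  have "C = strip (m - 1) (m + 1)"
    by (rule maximal_free_eq[OF C(2) closed_strip convex_strip _ sub])
      (use Ints.free_unimodular_image[OF T free_strip_Ints] img in simp)
  then show ?thesis
    using that[OF T] img by simp
qed

lemma vertical_maximal_free_UNIV:
  assumes C: "convex C" "maximal_free UNIV Delta2 C" "interior C \<noteq> {}" "lineality_direction (axis 2 1) C"
  obtains T where "unimodular_map UNIV T" "C = T ` strip 0 1"
proof -
  have fr: "free UNIV Delta2 C"
    using C(2) unfolding maximal_free_def by blast
  have ri: "rel_interior C = interior C"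
    using C(3) by (rule rel_interior_nonempty_interior)
  have width: "y$1 - x$1 \<le> 1" if "x \<in> C" "y \<in> C" for x y
  proof (rule ccontr)
    assume "\<not> y$1 - x$1 \<le> 1"
    then show False
      using not_free_wide_open_strip[of "x$1" "y$1" C "x$1 + (y$1 - x$1 - 1) / 2" UNIV] fr ri
        lineality_open_strip_subset_interior[OF C(1,4,3) that] by (simp add: field_simps)
  qed
  obtain a where "(\<lambda>x. x$1) ` C \<subseteq> {a..a + 1}"
    by (rule real_set_in_unit_interval[of "(\<lambda>x. x$1) ` C"]) (use C(3) width in auto)
  then have sub: "C \<subseteq> strip a (a + 1)"
    by (auto simp: strip_def)
  let ?T = "\<lambda>x. x + vector [a, 0] :: real^2"
  have T: "unimodular_map UNIV ?T"
    by (rule unimodular_map_translation) simp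
  have img: "?T ` strip 0 1 = strip a (a + 1)"
    using strip_translation[of a 0 1] by (simp add: add.commute)
  have "C = strip a (a + 1)"
    by (rule maximal_free_eq[OF C(2) closed_strip convex_strip _ sub])
      (use reals.free_unimodular_image[OF T free_strip_UNIV] img in simp)
  then show ?thesis
    using that[OF T] img by simp
qed

lemma (in translation_group) unbounded_maximal_free_unimodular_image:
  assumes "closed C" "convex C" "\<not> bounded C" "aff_dim C = 2" "maximal_free A Delta2 C"
    and T: "unimodular_map A T"
  shows "closed (T ` C) \<and> convex (T ` C) \<and> \<not> bounded (T ` C) \<and> aff_dim (T ` C) = 2
    \<and> maximal_free A Delta2 (T ` C)"
  using assms closed_unimodular_image[OF T] convex_unimodular_image[OF T] bounded_unimodular_image_iff[OF T]
    aff_dim_unimodular_image[OF T] maximal_free_unimodular_image[OF T] by simp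

lemma unbounded_maximal_free_strip_image:
  assumes A: "A = \<int> \<or> A = UNIV"
    and C: "closed C" "convex C" "\<not> bounded C" "aff_dim C = 2" "maximal_free A Delta2 C"
  shows "\<exists>T. unimodular_map A T \<and> C = T ` (if A = \<int> then strip (-1) 1 else strip 0 1)"
proof -
  interpret translation_group A
    using A by unfold_locales auto
  obtain T C' where T: "unimodular_map A T" "C = T ` C'" "convex C'" "maximal_free A Delta2 C'"
    "interior C' \<noteq> {}" "lineality_direction (axis 2 1) C'"
    using unbounded_maximal_free_normal_form[OF C] by blast
  obtain T' where T': "unimodular_map A T'" "C' = T' ` (if A = \<int> then strip (-1) 1 else strip 0 1)"
  proof (cases "A = \<int>")
    case True
    then show ?thesis
      using that vertical_maximal_free_Ints[OF T(3) _ T(5,6)] T(4) by auto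
  next
    case False
    then show ?thesis
      using that vertical_maximal_free_UNIV[OF T(3) _ T(5,6)] T(4) A by auto
  qed
  have "C = (T \<circ> T') ` (if A = \<int> then strip (-1) 1 else strip 0 1)"
    using T(2) T'(2) by (simp add: image_comp)
  then show ?thesis
    using unimodular_map_comp[OF T'(1) T(1)] by blast
qed

theorem proposition3p3:
  fixes A :: "real set"
  assumes "A = \<int> \<or> A = UNIV"
  defines "C0 \<equiv> (if A = \<int> then {x::real^2. -1 \<le> x $ 1 \<and> x $ 1 \<le> 1}
                            else {x::real^2. 0 \<le> x $ 1 \<and> x $ 1 \<le> 1})"
  shows "{C. closed C \<and> convex C \<and> \<not> bounded C \<and> aff_dim C = 2 \<and> maximal_free A Delta2 C}
           = {T ` C0 | T. unimodular_map A T}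
         \<and> lattice_width C0 = (if A = \<int> then 2 else 1)"
proof -
  interpret translation_group A
    using assms(1) by unfold_locales auto
  have C0: "C0 = (if A = \<int> then strip (-1) 1 else strip 0 1)"
    unfolding C0_def strip_def by simp
  have C0_props: "closed C0" "convex C0" "\<not> bounded C0" "aff_dim C0 = 2" "maximal_free A Delta2 C0"
    using assms(1) unfolding C0
    by (auto simp: closed_strip convex_strip unbounded_strip aff_dim_strip
        maximal_free_strip_Ints maximal_free_strip_UNIV)
  have "{C. closed C \<and> convex C \<and> \<not> bounded C \<and> aff_dim C = 2 \<and> maximal_free A Delta2 C}
      = {T ` C0 | T. unimodular_map A T}"
    using unbounded_maximal_free_strip_image[OF assms(1)]
      unbounded_maximal_free_unimodular_image[OF C0_props] unfolding C0 by blast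
  moreover have "lattice_width C0 = (if A = \<int> then 2 else 1)"
    unfolding C0 using lattice_width_strip[of "-1" 1] lattice_width_strip[of 0 1] by simp
  ultimately show ?thesis
    by blast
qed

end
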